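(* Let $n\geq 2$ and let $R$ be the unital associative ring $\langle x,y \mid x^n=0,\ y^n=0,\ xy+y^{n-1}x^{n-1}=1\rangle$. For $0\leq i,j<n$ put $a_{i,j}=y^ix^j-y^{i+1}x^{j+1}\in R$, and set $a_{i,j}=0$ whenever $i$ or $j$ lies outside $\{0,1,\dots,n-1\}$. Then for all $0\leq i,j<n$: $$a_{i,j}x=a_{i,j+1},\qquad a_{i,j}y=a_{i,j-1},\qquad xa_{i,j}=a_{i-1,j},\qquad ya_{i,j}=a_{i+1,j}.$$
   Context: $R$ denotes the quotient of the free unital associative ring $\mathbb{Z}\langle x,y\rangle$ by the two-sided ideal generated by $x^n$, $y^n$ and $xy+y^{n-1}x^{n-1}-1$; $x^0=y^0=1$. *)

theory Defs
  imports Main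
begin

text \<open>The elements a_{i,j} = y^i x^j - y^{i+1} x^{j+1} for 0 <= i,j < n, and 0 otherwise.
  Indices are integers so that i-1, j-1 may leave the range.\<close>
definition aij :: "nat \<Rightarrow> 'a::ring_1 \<Rightarrow> 'a \<Rightarrow> int \<Rightarrow> int \<Rightarrow> 'a" where
  "aij n x y i j =
     (if 0 \<le> i \<and> i < int n \<and> 0 \<le> j \<and> j < int n
      then y ^ nat i * x ^ nat j - y ^ (nat i + 1) * x ^ (nat j + 1)
      else 0)"

end

theory Submission
  imports Defs
begin

text \<open>Write \<open>m = n - 1\<close> and \<open>e = 1 - y x\<close>. Then \<open>a\<^sub>i\<^sub>,\<^sub>j = y\<^sup>i e x\<^sup>j\<close>, and the relation
  \<open>x y = 1 - y\<^sup>m x\<^sup>m\<close> gives \<open>e y = y\<^sup>n x\<^sup>m = 0\<close> and \<open>x e = y\<^sup>m x\<^sup>n = 0\<close>. Multiplying by \<open>x\<close> on the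
  right or \<open>y\<close> on the left just raises an exponent, the result vanishing once it reaches \<open>n\<close>.
  For the other two rules, \<open>e x\<^sup>k\<^sup>+\<^sup>1 y = e x\<^sup>k - e x\<^sup>k y\<^sup>m x\<^sup>m\<close>, and the correction term vanishes
  because \<open>e x\<^sup>k y\<^sup>l = 0\<close> whenever \<open>k < l\<close>, by induction on \<open>k\<close> using the same relation;
  symmetrically \<open>x\<^sup>l y\<^sup>k e = 0\<close> for \<open>k < l\<close>.\<close>

lemma power_eq_0_above:
  fixes z :: "'a::{monoid_mult, mult_zero}"
  assumes "z ^ n = 0" and "n \<le> k"
  shows "z ^ k = 0"
  by (metis assms le_add_diff_inverse power_add mult_zero_left)

locale nilpotent_relation =
  fixes x y :: "'a::ring_1" and m :: nat
  assumes x_power: "x ^ Suc m = 0"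
    and y_power: "y ^ Suc m = 0"
    and relation: "x * y + y ^ m * x ^ m = 1"
begin

definition e :: 'a where "e = 1 - y * x"

definition a :: "nat \<Rightarrow> nat \<Rightarrow> 'a" where "a i j = y ^ i * e * x ^ j"

lemma x_mult_y: "x * y = 1 - y ^ m * x ^ m"
  using relation by (simp add: eq_diff_eq)

lemma x_power_eq_0: "m < k \<Longrightarrow> x ^ k = 0"
  using power_eq_0_above[OF x_power] by simp

lemma y_power_eq_0: "m < k \<Longrightarrow> y ^ k = 0"
  using power_eq_0_above[OF y_power] by simp

lemma e_mult_y: "e * y = 0"
proof -
  have "e * y = y - y * (x * y)" by (simp add: e_def algebra_simps)
  also have "\<dots> = y ^ Suc m * x ^ m" by (simp add: x_mult_y algebra_simps mult.assoc)
  finally show ?thesis using y_power by simp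
qed

lemma x_mult_e: "x * e = 0"
proof -
  have "x * e = x - (x * y) * x" by (simp add: e_def algebra_simps)
  also have "\<dots> = y ^ m * x ^ Suc m" by (simp add: x_mult_y algebra_simps power_commutes)
  finally show ?thesis using x_power by simp
qed

lemma x_power_mult_y: "x ^ Suc k * y = x ^ k - x ^ k * y ^ m * x ^ m"
proof -
  have "x ^ Suc k * y = x ^ k * (x * y)" by (simp only: power_Suc2 mult.assoc)
  then show ?thesis by (simp add: x_mult_y algebra_simps mult.assoc)
qed

lemma x_mult_y_power: "x * y ^ Suc k = y ^ k - y ^ m * x ^ m * y ^ k"
proof -
  have "x * y ^ Suc k = (x * y) * y ^ k" by (simp only: power_Suc mult.assoc)
  then show ?thesis by (simp add: x_mult_y algebra_simps)
qed

lemma e_x_power_y_power_eq_0: "k < l \<Longrightarrow> e * x ^ k * y ^ l = 0"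
proof (induction k arbitrary: l)
  case 0
  then obtain l' where "l = Suc l'" by (cases l) auto
  then show ?case using e_mult_y by (simp add: mult.assoc[symmetric])
next
  case (Suc k)
  show ?case
  proof (cases "l \<le> m")
    case False
    then show ?thesis by (simp add: y_power_eq_0)
  next
    case True
    from Suc.prems obtain l' where l: "l = Suc l'" by (cases l) auto
    have "e * x ^ Suc k * y ^ l = e * (x ^ Suc k * y) * y ^ l'"
      by (simp only: l power_Suc mult.assoc)
    also have "\<dots> = e * x ^ k * y ^ l' - (e * x ^ k * y ^ m) * (x ^ m * y ^ l')"
      by (simp only: x_power_mult_y) (simp add: algebra_simps mult.assoc)
    also have "\<dots> = 0" using Suc True l by simp
    finally show ?thesis .
  qed
qed

lemma x_power_y_power_e_eq_0: "k < l \<Longrightarrow> x ^ l * y ^ k * e = 0"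
proof (induction k arbitrary: l)
  case 0
  then obtain l' where "l = Suc l'" by (cases l) auto
  then have "x ^ l * y ^ 0 * e = x ^ l' * (x * e)"
    by (simp only: power_Suc2 mult.assoc power_0 mult_1_right)
  then show ?case using x_mult_e by simp
next
  case (Suc k)
  show ?case
  proof (cases "l \<le> m")
    case False
    then show ?thesis by (simp add: x_power_eq_0)
  next
    case True
    from Suc.prems obtain l' where l: "l = Suc l'" by (cases l) auto
    have "x ^ l * y ^ Suc k * e = x ^ l' * (x * y ^ Suc k) * e"
      by (simp only: l power_Suc2 mult.assoc)
    also have "\<dots> = x ^ l' * y ^ k * e - (x ^ l' * y ^ m) * (x ^ m * y ^ k * e)"
      by (simp only: x_mult_y_power) (simp add: algebra_simps mult.assoc)
    also have "\<dots> = 0" using Suc True l by simp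
    finally show ?thesis .
  qed
qed

lemma a_eq_0: "m < i \<or> m < j \<Longrightarrow> a i j = 0"
  by (auto simp: a_def x_power_eq_0 y_power_eq_0)

lemma a_mult_x: "a i j * x = a i (Suc j)"
  by (simp add: a_def mult.assoc power_commutes)

lemma y_mult_a: "y * a i j = a (Suc i) j"
  by (simp add: a_def mult.assoc)

lemma a_0_mult_y: "a i 0 * y = 0"
  by (simp add: a_def mult.assoc e_mult_y)

lemma x_mult_a_0: "x * a 0 j = 0"
  by (simp add: a_def x_mult_e flip: mult.assoc)

lemma a_Suc_mult_y:
  assumes "j < m"
  shows "a i (Suc j) * y = a i j"
proof -
  have "a i (Suc j) * y = y ^ i * (e * (x ^ Suc j * y))" by (simp add: a_def mult.assoc)
  also have "\<dots> = y ^ i * (e * x ^ j) - y ^ i * ((e * x ^ j * y ^ m) * x ^ m)"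
    by (simp only: x_power_mult_y) (simp add: algebra_simps mult.assoc)
  also have "\<dots> = a i j"
    by (simp only: e_x_power_y_power_eq_0[OF assms]) (simp add: a_def mult.assoc)
  finally show ?thesis .
qed

lemma x_mult_a_Suc:
  assumes "i < m"
  shows "x * a (Suc i) j = a i j"
proof -
  have "x * a (Suc i) j = ((x * y ^ Suc i) * e) * x ^ j" by (simp add: a_def mult.assoc)
  also have "\<dots> = (y ^ i * e) * x ^ j - (y ^ m * (x ^ m * y ^ i * e)) * x ^ j"
    by (simp only: x_mult_y_power) (simp add: algebra_simps mult.assoc)
  also have "\<dots> = a i j" using assms by (simp add: a_def x_power_y_power_e_eq_0)
  finally show ?thesis .
qed

lemma aij_eq_a: "aij (Suc m) x y i j = (if 0 \<le> i \<and> 0 \<le> j then a (nat i) (nat j) else 0)"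
proof -
  have a_eq: "y ^ k * x ^ l - y ^ Suc k * x ^ Suc l = a k l" for k l
  proof -
    have "y ^ Suc k * x ^ Suc l = y ^ k * (y * x) * x ^ l"
      by (simp only: power_Suc2[of y] power_Suc[of x] mult.assoc)
    then show ?thesis by (simp add: a_def e_def algebra_simps)
  qed
  show ?thesis by (auto simp: aij_def a_eq simp del: power_Suc intro!: a_eq_0)
qed

end

theorem lemma3:
  fixes x y :: "'a::ring_1" and n :: nat
  assumes "n \<ge> 2"
    and "x ^ n = 0" and "y ^ n = 0"
    and "x * y + y ^ (n - 1) * x ^ (n - 1) = 1"
    and "i < n" and "j < n"
  shows "aij n x y (int i) (int j) * x = aij n x y (int i) (int j + 1)
       \<and> aij n x y (int i) (int j) * y = aij n x y (int i) (int j - 1)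
       \<and> x * aij n x y (int i) (int j) = aij n x y (int i - 1) (int j)
       \<and> y * aij n x y (int i) (int j) = aij n x y (int i + 1) (int j)"
proof -
  obtain m where n: "n = Suc m" using assms(1) by (cases n) auto
  interpret nilpotent_relation x y m using assms(2-4) by unfold_locales (auto simp: n)
  have i: "i \<le> m" and j: "j \<le> m" using assms(5,6) by (auto simp: n)
  have succ: "nat (int k + 1) = Suc k" "nat (1 + int k) = Suc k" for k by simp_all
  have right_y: "aij n x y (int i) (int j) * y = aij n x y (int i) (int j - 1)"
    using j a_0_mult_y a_Suc_mult_y[of "j - 1" i]
    by (cases j) (auto simp: n aij_eq_a succ)
  have left_x: "x * aij n x y (int i) (int j) = aij n x y (int i - 1) (int j)"
    using i x_mult_a_0 x_mult_a_Suc[of "i - 1" j]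
    by (cases i) (auto simp: n aij_eq_a succ)
  show ?thesis
    using right_y left_x by (simp add: n aij_eq_a succ a_mult_x y_mult_a)
qed

end
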